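(* Consider a network as described in the context with $\Delta_{ij}>0$ for all $i\ne j$, and let $r=1+\big\lfloor \max_i\theta_i/\min_{i\ne j}\Delta_{ij}\big\rfloor$. If at some spiking instant $t_n$ at least $r$ cells spike (i.e. $\#I(t_n)\ge r$), then all cells spike at $t_n$, i.e. $I(t_n)=\{1,\dots,m\}$.
   Context: Network model. Fix an integer $m\ge 2$ (the number of units, or cells). For each $i\in\{1,\dots,m\}$ the following data are given. - $X_i$ is a compact finite-dimensional smooth manifold. - $f_i$ is a continuous vector field on $X_i$. - $S_i:X_i\to\mathbb R$ is a $C^1$ function, called the satisfaction level. - $\theta_i>0$ is a constant, called the goal. These are required to satisfy: there is $v_i>0$ with $\nabla S_i(x)\cdot f_i(x)>v_i$ for every $x\in X_i$ with $S_i(x)<\theta_i$. Real interaction weights $\Delta_{ij}$ are given for $i\ne j$. The global state $\mathbf x(t)=(x_1(t),\dots,x_m(t))\in\prod_i X_i$, $t\ge 0$, evolves as follows. Spiking instants $0\le t_0<t_1<\cdots$ are the instants at which at least one cell spikes. Between consecutive spiking instants each $x_i$ evolves independently by $dx_i/dt=f_i(x_i)$. At an instant $t_n$, write $S_j(x_j(t_n^-))=\lim_{t\to t_n^-}S_j(x_j(t))$. The coalition is $I(t_n)=\bigcup_{p\ge 0}I_p(t_n)$, where: - $I_0(t_n)$ is the set of cells $i$ with $S_i(x_i(t_n^-))\ge\theta_i$; - for $p\ge1$, $I_p(t_n)$ is the set of cells $j\notin\bigcup_{k<p}I_k(t_n)$ with $S_j(x_j(t_n^-))+\sum_{k<p}\sum_{i\in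 I_k(t_n)}\Delta_{ij}\ge\theta_j$. The spiking instants are exactly the instants with $I_0(t_n)\neq\emptyset$, and the cells in $I(t_n)$ are said to spike at $t_n$. At $t_n$ the state jumps as follows: - for $j\in I(t_n)$, $x_j(t_n)$ is a point with $S_j(x_j(t_n))=0$; - for $j\notin I(t_n)$, $x_j(t_n)$ is a point with $S_j(x_j(t_n))=S_j(x_j(t_n^-))+\sum_{i\in I(t_n),\,i\ne j}\Delta_{ij}$. Initial states are assumed to satisfy $S_i(x_i(0))\in[0,\theta_i)$ for all $i$. The network is cooperative if $\Delta_{ij}\ge 0$ for all $i\ne j$. A cooperative network is large enough if $\sqrt m\ge 1+\frac{\max_i\theta_i}{\min_{i\ne j}\Delta_{ij}}$; in particular this requires $\Delta_{ij}>0$ for all $i\ne j$. The grand coalition is exhibited at $t_n$ if $I(t_n)=\{1,\dots,m\}$. *)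

theory Defs
  imports "HOL-Analysis.Analysis"
begin

text \<open>Cells are 1..m. s j is the pre-spike
satisfaction level S_j(x_j(t_n^-)), th j the goal, D i j the weight Delta_ij.
coal_layers m th D s p is a function whose value at k<=p is the layer I_k.\<close>

primrec coal_layers ::
  "nat \<Rightarrow> (nat \<Rightarrow> real) \<Rightarrow> (nat \<Rightarrow> nat \<Rightarrow> real) \<Rightarrow> (nat \<Rightarrow> real) \<Rightarrow> nat \<Rightarrow> (nat \<Rightarrow> nat set)" where
  "coal_layers m th D s 0 =
     (\<lambda>k. if k = 0 then {i \<in> {1..m}. th i \<le> s i} else {})"
| "coal_layers m th D s (Suc p) =
     (let L = coal_layers m th D s p in
      L(Suc p := {j \<in> {1..m}. j \<notin> (\<Union>k\<le>p. L k) \<and>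
                     th j \<le> s j + (\<Sum>k\<le>p. \<Sum>i\<in>L k. D i j)}))"

definition coal_layer ::
  "nat \<Rightarrow> (nat \<Rightarrow> real) \<Rightarrow> (nat \<Rightarrow> nat \<Rightarrow> real) \<Rightarrow> (nat \<Rightarrow> real) \<Rightarrow> nat \<Rightarrow> nat set" where
  "coal_layer m th D s p = coal_layers m th D s p p"

definition coalition ::
  "nat \<Rightarrow> (nat \<Rightarrow> real) \<Rightarrow> (nat \<Rightarrow> nat \<Rightarrow> real) \<Rightarrow> (nat \<Rightarrow> real) \<Rightarrow> nat set" where
  "coalition m th D s = (\<Union>p. coal_layer m th D s p)"

definition interval_start :: "(nat \<Rightarrow> real) \<Rightarrow> nat \<Rightarrow> real" where
  "interval_start tau k = (if k = 0 then 0 else tau (k - 1))"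

end

theory Submission imports Defs begin

text \<open>Between spikes every level increases strictly, so each pre-spike level dominates the
level right after the previous spike; the latter is 0 or a nonnegative level plus nonnegative
weights, hence all pre-spike levels are nonnegative. Once the coalition stops growing, a cell
outside it has pre-spike level plus the total weight received from the coalition below its goal.
With at least r spiking cells that weight is already at least r times the least weight, which
exceeds every goal, so no cell can stay outside.\<close>

lemma coal_layers_Suc_le:
  "k \<le> p \<Longrightarrow> coal_layers m th D s (Suc p) k = coal_layers m th D s p k"
  by (simp add: Let_def)

lemma coal_layers_eq_coal_layer:
  "k \<le> p \<Longrightarrow> coal_layers m th D s p k = coal_layer m th D s k"
proof (induction p rule: dec_induct)
  case base
  then show ?case by (simp add: coal_layer_def)
next
  case (step q)
  then have "k \<le> q" by simp
  then show ?case using step.IH by (simp only: coal_layers_Suc_le)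
qed

lemma coal_layers_subset: "coal_layers m th D s p k \<subseteq> {1..m}"
  by (induction p arbitrary: k) (auto simp: Let_def)

lemma coal_layer_subset: "coal_layer m th D s k \<subseteq> {1..m}"
  unfolding coal_layer_def by (rule coal_layers_subset)

lemma coalition_subset: "coalition m th D s \<subseteq> {1..m}"
  unfolding coalition_def by (intro UN_least coal_layer_subset)

lemma coal_layer_Suc:
  "coal_layer m th D s (Suc p) =
     {j \<in> {1..m}. j \<notin> (\<Union>k\<le>p. coal_layer m th D s k) \<and>
        th j \<le> s j + (\<Sum>k\<le>p. \<Sum>i\<in>coal_layer m th D s k. D i j)}"
proof -
  have sums: "(\<Sum>k\<le>p. \<Sum>i\<in>coal_layers m th D s p k. D i j)
      = (\<Sum>k\<le>p. \<Sum>i\<in>coal_layer m th D s k. D i j)" for j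
    by (rule sum.cong) (simp_all add: coal_layers_eq_coal_layer)
  have unions: "(\<Union>k\<le>p. coal_layers m th D s p k) = (\<Union>k\<le>p. coal_layer m th D s k)"
    by (rule SUP_cong) (simp_all add: coal_layers_eq_coal_layer)
  show ?thesis
    by (simp only: coal_layer_def[of _ _ _ _ "Suc p"] coal_layers.simps(2) Let_def fun_upd_same
        sums unions)
qed

lemma coal_layer_disjoint:
  assumes "k \<noteq> l"
  shows "coal_layer m th D s k \<inter> coal_layer m th D s l = {}"
proof -
  have "coal_layer m th D s k \<inter> coal_layer m th D s l = {}" if "k < l" for k l
  proof (cases l)
    case (Suc p)
    with that show ?thesis unfolding Suc coal_layer_Suc by auto
  qed (use that in simp)
  with assms show ?thesis by (metis Int_commute linorder_neqE_nat)
qed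

lemma sum_coal_layers:
  "(\<Sum>k\<le>p. \<Sum>i\<in>coal_layer m th D s k. D i j) = (\<Sum>i\<in>(\<Union>k\<le>p. coal_layer m th D s k). D i j)"
  by (rule sum.UNION_disjoint[symmetric])
    (auto intro: finite_subset[OF coal_layer_subset] simp: coal_layer_disjoint)

lemma coalition_eq_UN_coal_layer:
  obtains p where "(\<Union>k\<le>p. coal_layer m th D s k) = coalition m th D s"
proof -
  let ?C = "coalition m th D s"
  have "finite ?C" by (rule finite_subset[OF coalition_subset]) simp
  have "\<forall>i\<in>?C. \<exists>p. i \<in> coal_layer m th D s p" by (simp add: coalition_def)
  from bchoice[OF this] obtain f where f: "\<forall>i\<in>?C. i \<in> coal_layer m th D s (f i)" ..
  let ?p = "Max (f ` ?C)"
  have "\<forall>i\<in>?C. f i \<le> ?p" using \<open>finite ?C\<close> by simp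
  with f have "?C \<subseteq> (\<Union>k\<le>?p. coal_layer m th D s k)" by blast
  moreover have "(\<Union>k\<le>?p. coal_layer m th D s k) \<subseteq> ?C" unfolding coalition_def by blast
  ultimately show ?thesis by (intro that equalityI)
qed

lemma not_in_coalition_below_goal:
  assumes "j \<in> {1..m}" "j \<notin> coalition m th D s"
  shows "s j + (\<Sum>i\<in>coalition m th D s. D i j) < th j"
proof -
  obtain p where p: "(\<Union>k\<le>p. coal_layer m th D s k) = coalition m th D s"
    by (rule coalition_eq_UN_coal_layer)
  have "j \<notin> coal_layer m th D s (Suc p)" using assms(2) by (auto simp: coalition_def)
  with assms show ?thesis unfolding coal_layer_Suc sum_coal_layers p by auto
qed

lemma coalition_eq_all_if_heavy:
  assumes s_nonneg: "\<forall>j\<in>{1..m}. 0 \<le> s j"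
    and weight_ge: "\<And>i j. i \<in> {1..m} \<Longrightarrow> j \<in> {1..m} \<Longrightarrow> i \<noteq> j \<Longrightarrow> w \<le> D i j"
    and goal_le: "\<And>j. j \<in> {1..m} \<Longrightarrow> th j \<le> real (card (coalition m th D s)) * w"
  shows "coalition m th D s = {1..m}"
proof (rule ccontr)
  let ?C = "coalition m th D s"
  assume "?C \<noteq> {1..m}"
  then obtain j where j: "j \<in> {1..m}" "j \<notin> ?C" using coalition_subset by blast
  have "th j \<le> (\<Sum>i\<in>?C. w)" using goal_le[OF j(1)] by simp
  also have "\<dots> \<le> (\<Sum>i\<in>?C. D i j)"
    using j coalition_subset[of m th D s] by (intro sum_mono weight_ge) auto
  finally have "th j \<le> (\<Sum>i\<in>?C. D i j)" .
  moreover have "0 \<le> s j" using s_nonneg j(1) by blast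
  ultimately show False using not_in_coalition_below_goal[OF j] by linarith
qed

lemma increasing_left_limit_ge_start:
  fixes f :: "real \<Rightarrow> real"
  assumes "a < b"
    and "continuous_on {a..<b} f"
    and "\<And>t. t \<in> {a<..<b} \<Longrightarrow> \<exists>d. (f has_real_derivative d) (at t) \<and> 0 < d"
    and "(f \<longlongrightarrow> L) (at_left b)"
  shows "f a \<le> L"
proof (rule tendsto_lowerbound[OF assms(4)])
  have "f a < f t" if t: "t \<in> {a<..<b}" for t
  proof (rule DERIV_pos_imp_increasing_open[of a t f])
    show "a < t" using t by simp
    show "\<exists>y. (f has_real_derivative y) (at u) \<and> 0 < y" if "a < u" "u < t" for u
      using assms(3) that t by simp
    show "continuous_on {a..t} f"
      using assms(2) by (rule continuous_on_subset) (use t in auto)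
  qed
  then show "\<forall>\<^sub>F t in at_left b. f a \<le> f t"
    using eventually_at_left_real[OF assms(1)] by (elim eventually_mono) (meson less_imp_le)
qed simp

lemma pre_spike_levels_nonneg:
  fixes x :: "nat \<Rightarrow> real \<Rightarrow> 'a"
  assumes v_pos: "\<forall>i\<in>{1..m}. 0 < v i"
    and D_pos: "\<forall>i\<in>{1..m}. \<forall>j\<in>{1..m}. i \<noteq> j \<longrightarrow> 0 < D i j"
    and init: "\<forall>i\<in>{1..m}. 0 \<le> S i (x i 0) \<and> S i (x i 0) < th i"
    and tau_mono: "\<forall>k\<le>n. interval_start tau k < tau k"
    and flow: "\<forall>k\<le>n. \<forall>i\<in>{1..m}.
        continuous_on {interval_start tau k..<tau k} (\<lambda>t. S i (x i t)) \<and>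
        (\<forall>t\<in>{interval_start tau k<..<tau k}. S i (x i t) < th i \<and>
            (\<exists>d. ((\<lambda>t. S i (x i t)) has_real_derivative d) (at t) \<and> v i < d))"
    and leftlim: "\<forall>k\<le>n. \<forall>i\<in>{1..m}. ((\<lambda>t. S i (x i t)) \<longlongrightarrow> Sm i k) (at_left (tau k))"
    and jump: "\<forall>k\<le>n. \<forall>j\<in>{1..m}.
        S j (x j (tau k)) =
          (if j \<in> coalition m th D (\<lambda>i. Sm i k) then 0
           else Sm j k + (\<Sum>i\<in>coalition m th D (\<lambda>i. Sm i k) - {j}. D i j))"
    and "k \<le> n"
  shows "\<forall>j\<in>{1..m}. 0 \<le> Sm j k"
proof -
  have from_start: "0 \<le> Sm j k"
    if k: "k \<le> n" and j: "j \<in> {1..m}" and "0 \<le> S j (x j (interval_start tau k))" for j k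
  proof -
    note flow_kj = flow[rule_format, OF k j]
    have "S j (x j (interval_start tau k)) \<le> Sm j k"
    proof (rule increasing_left_limit_ge_start[where f = "\<lambda>t. S j (x j t)"])
      fix t assume "t \<in> {interval_start tau k<..<tau k}"
      with flow_kj obtain d where "((\<lambda>t. S j (x j t)) has_real_derivative d) (at t)" "v j < d"
        by blast
      moreover have "0 < v j" using v_pos j by blast
      ultimately show "\<exists>d. ((\<lambda>t. S j (x j t)) has_real_derivative d) (at t) \<and> 0 < d"
        by force
    qed (use tau_mono[rule_format, OF k] flow_kj leftlim[rule_format, OF k j] in simp_all)
    with that(3) show ?thesis by linarith
  qed
  show ?thesis
    using \<open>k \<le> n\<close>
  proof (induction k)
    case 0
    then show ?case using init by (auto intro: from_start simp: interval_start_def)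
  next
    case (Suc k)
    have "0 \<le> S j (x j (tau k))" if j: "j \<in> {1..m}" for j
    proof -
      let ?C = "coalition m th D (\<lambda>i. Sm i k)"
      have "0 \<le> (\<Sum>i\<in>?C - {j}. D i j)"
        using coalition_subset D_pos j by (intro sum_nonneg) (force intro: less_imp_le)
      moreover have "0 \<le> Sm j k" using Suc j by simp
      moreover have "k \<le> n" using Suc.prems by simp
      ultimately show ?thesis
        using jump[rule_format, of k j] j by (metis add_nonneg_nonneg order_refl)
    qed
    then show ?case using Suc.prems by (auto intro: from_start simp: interval_start_def)
  qed
qed

lemma min_weight_pos_le:
  fixes D :: "nat \<Rightarrow> nat \<Rightarrow> real"
  assumes "m \<ge> 2" and D_pos: "\<forall>i\<in>{1..m}. \<forall>j\<in>{1..m}. i \<noteq> j \<longrightarrow> 0 < D i j"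
  defines "w \<equiv> Min {D i j | i j. i \<in> {1..m} \<and> j \<in> {1..m} \<and> i \<noteq> j}"
  shows "0 < w" and "\<And>i j. i \<in> {1..m} \<Longrightarrow> j \<in> {1..m} \<Longrightarrow> i \<noteq> j \<Longrightarrow> w \<le> D i j"
proof -
  let ?E = "{D i j | i j. i \<in> {1..m} \<and> j \<in> {1..m} \<and> i \<noteq> j}"
  have "?E \<subseteq> (\<lambda>(i, j). D i j) ` ({1..m} \<times> {1..m})" by auto
  then have "finite ?E" by (rule finite_subset) simp
  moreover have "D 1 2 \<in> ?E" using \<open>m \<ge> 2\<close> by force
  ultimately show "0 < w" using D_pos unfolding w_def by (subst Min_gr_iff) auto
  show "w \<le> D i j" if "i \<in> {1..m}" "j \<in> {1..m}" "i \<noteq> j" for i j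
    using \<open>finite ?E\<close> that unfolding w_def by (intro Min_le) auto
qed

theorem mainTheorem5:
  fixes m n :: nat
    and th v :: "nat \<Rightarrow> real"
    and D :: "nat \<Rightarrow> nat \<Rightarrow> real"
    and x :: "nat \<Rightarrow> real \<Rightarrow> 'a"
    and S :: "nat \<Rightarrow> 'a \<Rightarrow> real"
    and tau :: "nat \<Rightarrow> real"
    and Sm :: "nat \<Rightarrow> nat \<Rightarrow> real"
  assumes m2: "m \<ge> 2"
    and th_pos: "\<forall>i\<in>{1..m}. 0 < th i"
    and v_pos: "\<forall>i\<in>{1..m}. 0 < v i"
    and D_pos: "\<forall>i\<in>{1..m}. \<forall>j\<in>{1..m}. i \<noteq> j \<longrightarrow> 0 < D i j"
    and init: "\<forall>i\<in>{1..m}. 0 \<le> S i (x i 0) \<and> S i (x i 0) < th i"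
    and tau_mono: "\<forall>k\<le>n. interval_start tau k < tau k"
    and flow: "\<forall>k\<le>n. \<forall>i\<in>{1..m}.
        continuous_on {interval_start tau k..<tau k} (\<lambda>t. S i (x i t)) \<and>
        (\<forall>t\<in>{interval_start tau k<..<tau k}. S i (x i t) < th i \<and>
            (\<exists>d. ((\<lambda>t. S i (x i t)) has_real_derivative d) (at t) \<and> v i < d))"
    and leftlim: "\<forall>k\<le>n. \<forall>i\<in>{1..m}. ((\<lambda>t. S i (x i t)) \<longlongrightarrow> Sm i k) (at_left (tau k))"
    and spiking: "\<forall>k\<le>n. \<exists>i\<in>{1..m}. th i \<le> Sm i k"
    and jump: "\<forall>k\<le>n. \<forall>j\<in>{1..m}.
        S j (x j (tau k)) =
          (if j \<in> coalition m th D (\<lambda>i. Sm i k) then 0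
           else Sm j k + (\<Sum>i\<in>coalition m th D (\<lambda>i. Sm i k) - {j}. D i j))"
    and big: "int (card (coalition m th D (\<lambda>i. Sm i n))) \<ge>
        1 + \<lfloor>Max (th ` {1..m}) / Min {D i j | i j. i \<in> {1..m} \<and> j \<in> {1..m} \<and> i \<noteq> j}\<rfloor>"
  shows "coalition m th D (\<lambda>i. Sm i n) = {1..m}"
proof (rule coalition_eq_all_if_heavy)
  let ?w = "Min {D i j | i j. i \<in> {1..m} \<and> j \<in> {1..m} \<and> i \<noteq> j}"
  let ?M = "Max (th ` {1..m})"
  show "\<forall>j\<in>{1..m}. 0 \<le> Sm j n"
    using pre_spike_levels_nonneg[where S = S and x = x and Sm = Sm and tau = tau,
        OF v_pos D_pos init tau_mono flow leftlim jump] by simp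
  show "\<And>i j. i \<in> {1..m} \<Longrightarrow> j \<in> {1..m} \<Longrightarrow> i \<noteq> j \<Longrightarrow> ?w \<le> D i j"
    by (rule min_weight_pos_le(2)[OF m2 D_pos])
  fix j assume "j \<in> {1..m}"
  then have "th j \<le> ?M" by (intro Max_ge) auto
  also have "?M \<le> real (card (coalition m th D (\<lambda>i. Sm i n))) * ?w"
  proof -
    have "?M / ?w < real (card (coalition m th D (\<lambda>i. Sm i n)))" using big by linarith
    then show ?thesis using min_weight_pos_le(1)[OF m2 D_pos] by (simp add: field_simps)
  qed
  finally show "th j \<le> real (card (coalition m th D (\<lambda>i. Sm i n))) * ?w" .
qed

end
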